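(* Let $1 \leq p \leq q < \infty$ and let $\lambda, \mu, \nu, \alpha, \beta$ be real numbers. Let $H_{\lambda,\mu,\nu}$ be the integral operator $$H_{\lambda,\mu,\nu} f(y) = \int_{0}^{\infty} \frac{x^{\mu} y^{\nu}}{(x+y)^{\lambda}} f(x)\, dx, \quad y > 0,$$ acting on real-valued measurable functions on $(0,\infty)$. Then $H_{\lambda,\mu,\nu}$ is bounded from $L^p_\alpha$ to $L^q_\beta$ if and only if $$\lambda = \mu + \nu + 1 + \frac{\beta+1}{q} - \frac{\alpha+1}{p} \quad\text{and}\quad -q\nu < \beta + 1 < q(\lambda - \nu),$$ or equivalently, $$\lambda = \mu + \nu + 1 + \frac{\beta+1}{q} - \frac{\alpha+1}{p} \quad\text{and}\quad p(\mu + 1 - \lambda) < \alpha + 1 < p(\mu + 1).$$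
   Context: For $1\le p<\infty$ and $\theta\in\mathbb{R}$, $L^p_\theta$ is the space of real-valued measurable functions $f$ on $(0,\infty)$ with $\|f\|_{p,\theta} = \left(\int_0^\infty |f(x)|^p x^\theta\,dx\right)^{1/p} < \infty$. Bounded from $L^p_\alpha$ to $L^q_\beta$ means: for every $f \in L^p_\alpha$ the integral defining $H_{\lambda,\mu,\nu}f$ converges (a.e.), $H_{\lambda,\mu,\nu}f\in L^q_\beta$, and $\|H_{\lambda,\mu,\nu} f\|_{q,\beta} \le C\|f\|_{p,\alpha}$ for a constant $C$ independent of $f$. *)

theory Defs
  imports "HOL-Analysis.Analysis"
begin

definition Lpw :: "real \<Rightarrow> real \<Rightarrow> (real \<Rightarrow> real) \<Rightarrow> bool" where
  "Lpw p \<theta> f \<longleftrightarrow> set_borel_measurable lebesgue {0<..} f \<and>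
     (\<integral>\<^sup>+ x\<in>{0<..}. ennreal (\<bar>f x\<bar> powr p * x powr \<theta>) \<partial>lebesgue) < \<infinity>"

definition wnorm :: "real \<Rightarrow> real \<Rightarrow> (real \<Rightarrow> real) \<Rightarrow> real" where
  "wnorm p \<theta> f =
     (enn2real (\<integral>\<^sup>+ x\<in>{0<..}. ennreal (\<bar>f x\<bar> powr p * x powr \<theta>) \<partial>lebesgue)) powr (1 / p)"

definition Hkernel :: "real \<Rightarrow> real \<Rightarrow> real \<Rightarrow> real \<Rightarrow> real \<Rightarrow> real" where
  "Hkernel lam \<mu> \<nu> x y = x powr \<mu> * y powr \<nu> / (x + y) powr lam"

definition Hop :: "real \<Rightarrow> real \<Rightarrow> real \<Rightarrow> (real \<Rightarrow> real) \<Rightarrow> real \<Rightarrow> real" where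
  "Hop lam \<mu> \<nu> f y = (LINT x:{0<..}|lebesgue. Hkernel lam \<mu> \<nu> x y * f x)"

definition H_bounded :: "real \<Rightarrow> real \<Rightarrow> real \<Rightarrow> real \<Rightarrow> real \<Rightarrow> real \<Rightarrow> real \<Rightarrow> bool" where
  "H_bounded lam \<mu> \<nu> p \<alpha> q \<beta> \<longleftrightarrow>
     (\<exists>C. \<forall>f. Lpw p \<alpha> f \<longrightarrow>
        (AE y\<in>{0<..} in lebesgue. set_integrable lebesgue {0<..} (\<lambda>x. Hkernel lam \<mu> \<nu> x y * f x))
        \<and> Lpw q \<beta> (Hop lam \<mu> \<nu> f)
        \<and> wnorm q \<beta> (Hop lam \<mu> \<nu> f) \<le> C * wnorm p \<alpha> f)"

end

theory Submission
  imports Defs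
begin

text \<open>
  Put \<open>A = (\<alpha> + 1) / p\<close> and \<open>B = (\<beta> + 1) / q\<close>; the scaling condition reads
  \<open>\<lambda> = \<mu> + \<nu> + 1 + B - A\<close>. After the substitution \<open>g x = \<bar>f x\<bar> x\<^sup>A\<close> the
  problem lives on the multiplicative group \<open>(0, \<infinity>)\<close> with Haar measure \<open>dx / x\<close>,
  and the kernel is dominated by \<open>2\<^bsup>\<bar>\<lambda>\<bar>\<^esup> y\<^bsup>-B\<^esup> \<kappa>(y, x) x\<^sup>A\<close>, where the
  tent \<open>\<kappa>(y, x)\<close> equals \<open>(x / y)\<^bsup>\<mu> + 1 - A\<^esup>\<close> for \<open>x \<le> y\<close> and
  \<open>(y / x)\<^bsup>\<nu> + B\<^esup>\<close> for \<open>x > y\<close>. The two inequalities of the theorem say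
  precisely that both exponents are positive, i.e. that the tent lies in every
  \<open>L\<^sup>r(dx / x)\<close>; Young's inequality for this convolution with
  \<open>1 + 1/q = 1/p + 1/r\<close>, proved by a three-factor Hoelder inequality followed by
  Fubini, then gives boundedness.

  Conversely, testing on the indicators of \<open>[t, 2t]\<close> shows that both sides of the
  norm inequality are powers of \<open>t\<close>, which forces the scaling condition, and testing
  on the indicator of \<open>[1, 2]\<close> shows that \<open>H f\<close> is at least of order \<open>y\<^sup>\<nu>\<close>
  near \<open>0\<close> and of order \<open>y\<^bsup>\<nu> - \<lambda>\<^esup>\<close> near \<open>\<infinity>\<close>; membership in
  \<open>L\<^sup>q\<^sub>\<beta>\<close> then forces the two inequalities.
\<close>

lemma powr_mult2_le_convex_comb:
  fixes u v a b :: real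
  assumes "0 \<le> u" "0 \<le> v" "0 \<le> a" "0 \<le> b" "a + b = 1"
  shows "u powr a * v powr b \<le> a * u + b * v"
proof (cases "u = 0 \<or> v = 0")
  case True
  then show ?thesis using assms by auto
next
  case False
  then show ?thesis using assms by (intro Youngs_inequality_0) auto
qed

lemma powr_mult3_le_convex_comb:
  fixes u v w a b c :: real
  assumes "0 \<le> u" "0 \<le> v" "0 \<le> w" "0 \<le> a" "0 \<le> b" "0 \<le> c" "a + b + c = 1"
  shows "u powr a * v powr b * w powr c \<le> a * u + b * v + c * w"
proof (cases "a + b = 0")
  case True
  then have a: "a = 0" and b: "b = 0" and c: "c = 1" using assms by auto
  show ?thesis unfolding a b c using assms by (auto simp: powr_def)
next
  case False
  define s where "s = a + b"
  have s: "0 < s" using False assms by (simp add: s_def)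
  define m where "m = (a/s) * u + (b/s) * v"
  have "u powr a * v powr b = (u powr (a/s) * v powr (b/s)) powr s"
    using s assms by (simp add: powr_mult powr_powr)
  also have "\<dots> \<le> m powr s"
    unfolding m_def using s assms
    by (intro powr_mono2 powr_mult2_le_convex_comb) (auto simp: s_def add_divide_distrib[symmetric])
  finally have "u powr a * v powr b * w powr c \<le> m powr s * w powr c"
    by (rule mult_right_mono) simp
  also have "\<dots> \<le> s * m + c * w"
    using assms s by (intro powr_mult2_le_convex_comb) (auto simp: m_def s_def)
  also have "\<dots> = a * u + b * v + c * w"
    using s by (simp add: m_def distrib_left)
  finally show ?thesis .
qed

lemma powr_bounds_of_comparable:
  fixes t x c e :: real
  assumes "0 < t" "t \<le> x" "x \<le> c * t"
  shows "x powr e \<le> c powr \<bar>e\<bar> * t powr e" and "c powr - \<bar>e\<bar> * t powr e \<le> x powr e"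
proof -
  have x: "0 < x" using assms by simp
  have "0 < c * t" using assms by linarith
  then have c: "0 < c" using assms by (simp add: zero_less_mult_iff)
  have "ln x \<le> ln (c * t)" using assms x by simp
  then have d: "0 \<le> ln x - ln t" "ln x - ln t \<le> ln c" using assms c by (auto simp: ln_mult)
  have "\<bar>e * (ln x - ln t)\<bar> \<le> \<bar>e\<bar> * ln c"
    using d by (simp add: abs_mult mult_left_mono)
  then have "e * (ln x - ln t) \<le> \<bar>e\<bar> * ln c" "- (\<bar>e\<bar> * ln c) \<le> e * (ln x - ln t)"
    by linarith+
  moreover have "x powr e = exp (e * (ln x - ln t)) * t powr e"
    using x assms by (simp add: powr_def exp_add[symmetric] algebra_simps)
  moreover have "c powr \<bar>e\<bar> = exp (\<bar>e\<bar> * ln c)" "c powr - \<bar>e\<bar> = exp (- (\<bar>e\<bar> * ln c))"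
    using c by (simp_all add: powr_def)
  ultimately show "x powr e \<le> c powr \<bar>e\<bar> * t powr e" "c powr - \<bar>e\<bar> * t powr e \<le> x powr e"
    by (simp_all add: mult_right_mono)
qed

section \<open>Hoelder's inequality for three functions\<close>

lemma nn_integral_powr_prod3_le:
  fixes F1 F2 F3 :: "'a \<Rightarrow> real"
  assumes [measurable]: "F1 \<in> borel_measurable M" "F2 \<in> borel_measurable M" "F3 \<in> borel_measurable M"
    and nonneg: "\<And>x. 0 \<le> F1 x" "\<And>x. 0 \<le> F2 x" "\<And>x. 0 \<le> F3 x"
    and exps: "0 \<le> a" "0 \<le> b" "0 \<le> c" "a + b + c = 1"
    and I: "(\<integral>\<^sup>+x. F1 x \<partial>M) = ennreal I1" "(\<integral>\<^sup>+x. F2 x \<partial>M) = ennreal I2"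
      "(\<integral>\<^sup>+x. F3 x \<partial>M) = ennreal I3"
    and I_nonneg: "0 \<le> I1" "0 \<le> I2" "0 \<le> I3"
  shows "(\<integral>\<^sup>+x. F1 x powr a * F2 x powr b * F3 x powr c \<partial>M) \<le> I1 powr a * I2 powr b * I3 powr c"
proof (cases "I1 = 0 \<or> I2 = 0 \<or> I3 = 0")
  case True
  have AE_zero: "AE x in M. F x = 0"
    if "F \<in> borel_measurable M" "\<And>x. 0 \<le> F x" "(\<integral>\<^sup>+x. F x \<partial>M) = 0" for F
    using that by (subst (asm) nn_integral_0_iff_AE) auto
  have "AE x in M. F1 x = 0 \<or> F2 x = 0 \<or> F3 x = 0"
    using True AE_zero[of F1] AE_zero[of F2] AE_zero[of F3] nonneg I by (auto elim!: eventually_mono)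
  then have "(\<integral>\<^sup>+x. F1 x powr a * F2 x powr b * F3 x powr c \<partial>M) = (\<integral>\<^sup>+x. 0 \<partial>M)"
    by (intro nn_integral_cong_AE) (auto elim!: eventually_mono)
  then show ?thesis by simp
next
  case False
  then have pos: "0 < I1" "0 < I2" "0 < I3" using I_nonneg by auto
  define P where "P = I1 powr a * I2 powr b * I3 powr c"
  have P: "0 < P" unfolding P_def using pos by simp
  \<comment> \<open>AM-GM applied to the normalised functions \<open>F\<^sub>k / I\<^sub>k\<close>\<close>
  have "F1 x powr a * F2 x powr b * F3 x powr c
      = P * ((F1 x / I1) powr a * (F2 x / I2) powr b * (F3 x / I3) powr c)" for x
    unfolding P_def using pos nonneg by (simp add: powr_divide)
  also have "\<dots> x \<le> P * (a * (F1 x / I1) + b * (F2 x / I2) + c * (F3 x / I3))" for x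
    using P pos nonneg exps by (intro mult_left_mono powr_mult3_le_convex_comb) auto
  also have "\<dots> x = (P * a / I1) * F1 x + (P * b / I2) * F2 x + (P * c / I3) * F3 x" for x
    by (simp add: field_simps)
  finally have real_bound: "F1 x powr a * F2 x powr b * F3 x powr c
      \<le> (P * a / I1) * F1 x + (P * b / I2) * F2 x + (P * c / I3) * F3 x" for x .
  have ennreal_lin3: "ennreal (A * u + B * v + C * w) = ennreal A * u + ennreal B * v + ennreal C * w"
    if "0 \<le> A" "0 \<le> B" "0 \<le> C" "0 \<le> u" "0 \<le> v" "0 \<le> w" for A B C u v w :: real
    using that by (simp add: ennreal_plus ennreal_mult)
  have pointwise: "ennreal (F1 x powr a * F2 x powr b * F3 x powr c)
      \<le> ennreal (P * a / I1) * F1 x + ennreal (P * b / I2) * F2 x + ennreal (P * c / I3) * F3 x" for x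
  proof -
    have "ennreal (F1 x powr a * F2 x powr b * F3 x powr c)
        \<le> ennreal ((P * a / I1) * F1 x + (P * b / I2) * F2 x + (P * c / I3) * F3 x)"
      by (rule ennreal_leI[OF real_bound])
    also have "\<dots> = ennreal (P * a / I1) * F1 x + ennreal (P * b / I2) * F2 x + ennreal (P * c / I3) * F3 x"
      by (rule ennreal_lin3) (use P pos exps nonneg in auto)
    finally show ?thesis .
  qed
  have "(\<integral>\<^sup>+x. F1 x powr a * F2 x powr b * F3 x powr c \<partial>M)
      \<le> (\<integral>\<^sup>+x. ennreal (P * a / I1) * F1 x + ennreal (P * b / I2) * F2 x
            + ennreal (P * c / I3) * F3 x \<partial>M)"
    by (intro nn_integral_mono pointwise)
  also have "\<dots> = ennreal (P * a / I1) * I1 + ennreal (P * b / I2) * I2 + ennreal (P * c / I3) * I3"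
    by (simp add: nn_integral_add nn_integral_cmult I)
  also have "\<dots> = ennreal (P * a) + ennreal (P * b) + ennreal (P * c)"
    using P pos exps by (simp add: ennreal_mult[symmetric])
  also have "\<dots> = ennreal (P * a + P * b + P * c)"
    using P exps by (simp add: ennreal_plus)
  also have "P * a + P * b + P * c = P"
    using exps by (metis distrib_left mult.right_neutral)
  finally show ?thesis by (simp add: P_def)
qed

section \<open>The tent kernel on the multiplicative group\<close>

lemma measurable_ident_lebesgue [measurable]: "(\<lambda>x::real. x) \<in> borel_measurable lebesgue"
  by (rule measurable_completion) simp

lemma sigma_finite_lebesgue: "sigma_finite_measure (lebesgue :: real measure)"
proof -
  obtain A :: "real set set" where A:
    "countable A" "A \<subseteq> sets lborel" "\<Union>A = space lborel" "\<forall>a\<in>A. emeasure lborel a \<noteq> \<infinity>"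
    using lborel.sigma_finite_countable by blast
  show ?thesis
    by unfold_locales (intro exI[of _ A], use A in \<open>auto\<close>)
qed

definition tent :: "real \<Rightarrow> real \<Rightarrow> real \<Rightarrow> real \<Rightarrow> real" where
  "tent a b z t = (if t \<le> z then (t / z) powr a else (z / t) powr b)"

lemma measurable_tent [measurable (raw)]:
  assumes [measurable]: "f \<in> borel_measurable M" "g \<in> borel_measurable M"
  shows "(\<lambda>x. tent a b (f x) (g x)) \<in> borel_measurable M"
  unfolding tent_def by measurable

lemma tent_nonneg: "0 \<le> tent a b z t"
  by (simp add: tent_def)

lemma tent_pos: "0 < z \<Longrightarrow> 0 < t \<Longrightarrow> 0 < tent a b z t"
  by (simp add: tent_def)

lemma tent_le_one: "0 \<le> a \<Longrightarrow> 0 \<le> b \<Longrightarrow> 0 < z \<Longrightarrow> 0 < t \<Longrightarrow> tent a b z t \<le> 1"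
  by (auto simp: tent_def intro!: powr_le1)

lemma tent_powr: "0 < z \<Longrightarrow> 0 < t \<Longrightarrow> tent a b z t powr r = tent (a * r) (b * r) z t"
  by (simp add: tent_def powr_powr)

lemma tent_swap: "0 < z \<Longrightarrow> 0 < t \<Longrightarrow> tent a b z t = tent b a t z"
  by (auto simp: tent_def)

lemma nn_integral_tent_Haar:
  assumes a: "0 < a" and b: "0 < b" and z: "0 < z"
  shows "(\<integral>\<^sup>+t\<in>{0<..}. ennreal (tent a b z t * t powr -1) \<partial>lebesgue) = ennreal (1/a + 1/b)"
proof -
  have "((\<lambda>t. z powr -a * t powr (a - 1)) has_integral (z powr -a * (z powr (a - 1 + 1) / (a - 1 + 1)))) {0..z}"
    using a z by (intro has_integral_mult_right has_integral_powr_from_0) auto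
  also have "z powr -a * (z powr (a - 1 + 1) / (a - 1 + 1)) = 1/a"
    using a z by (simp add: powr_minus field_simps)
  finally have below: "(\<integral>\<^sup>+t\<in>{0..z}. ennreal (z powr -a * t powr (a - 1)) \<partial>lborel) = ennreal (1/a)"
    by (rule nn_integral_has_integral_lebesgue'[rotated]) simp
  have "((\<lambda>t. z powr b * t powr (-b - 1)) has_integral (z powr b * (-(z powr (-b - 1 + 1)) / (-b - 1 + 1)))) {z..}"
    using b z by (intro has_integral_mult_right has_integral_powr_to_inf) auto
  also have "z powr b * (-(z powr (-b - 1 + 1)) / (-b - 1 + 1)) = 1/b"
    using b z by (simp add: powr_minus field_simps)
  finally have above: "(\<integral>\<^sup>+t\<in>{z..}. ennreal (z powr b * t powr (-b - 1)) \<partial>lborel) = ennreal (1/b)"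
    by (rule nn_integral_has_integral_lebesgue'[rotated]) simp
  have "AE t in lborel. ennreal (tent a b z t * t powr -1) * indicator {0<..} t
      = ennreal (z powr -a * t powr (a - 1)) * indicator {0..z} t
        + ennreal (z powr b * t powr (-b - 1)) * indicator {z..} t"
    using AE_lborel_singleton[of z]
  proof (rule eventually_mono)
    fix t :: real
    assume "t \<noteq> z"
    then consider "t \<le> 0" | "0 < t" "t < z" | "z < t" by linarith
    then show "ennreal (tent a b z t * t powr -1) * indicator {0<..} t
      = ennreal (z powr -a * t powr (a - 1)) * indicator {0..z} t
        + ennreal (z powr b * t powr (-b - 1)) * indicator {z..} t"
    proof cases
      case 2
      then have "tent a b z t * t powr -1 = z powr -a * t powr (a - 1)"
        by (simp add: tent_def powr_divide powr_minus powr_diff field_simps)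
      then show ?thesis using 2 by (simp add: indicator_def)
    next
      case 3
      then have "tent a b z t * t powr -1 = z powr b * t powr (-b - 1)"
        using z by (simp add: tent_def powr_divide powr_minus powr_diff powr_add field_simps)
      then show ?thesis using 3 z by (simp add: indicator_def)
    qed (use z in \<open>simp add: indicator_def\<close>)
  qed
  then have "(\<integral>\<^sup>+t\<in>{0<..}. ennreal (tent a b z t * t powr -1) \<partial>lborel)
      = (\<integral>\<^sup>+t\<in>{0..z}. ennreal (z powr -a * t powr (a - 1)) \<partial>lborel)
        + (\<integral>\<^sup>+t\<in>{z..}. ennreal (z powr b * t powr (-b - 1)) \<partial>lborel)"
    by (subst nn_integral_add[symmetric]) (auto intro: nn_integral_cong_AE)
  then show ?thesis
    using a b by (simp add: nn_integral_completion below above ennreal_plus)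
qed

lemma nn_integral_tent_Haar_first:
  assumes "0 < a" "0 < b" "0 < t"
  shows "(\<integral>\<^sup>+z\<in>{0<..}. ennreal (tent a b z t * z powr -1) \<partial>lebesgue) = ennreal (1/a + 1/b)"
proof -
  have "(\<integral>\<^sup>+z\<in>{0<..}. ennreal (tent a b z t * z powr -1) \<partial>lebesgue)
      = (\<integral>\<^sup>+z\<in>{0<..}. ennreal (tent b a t z * z powr -1) \<partial>lebesgue)"
    using assms by (intro nn_integral_cong) (auto simp: tent_swap indicator_def)
  then show ?thesis using nn_integral_tent_Haar[of b a t] assms by (simp add: add.commute)
qed

lemma nn_integral_tent_Fubini:
  fixes h :: "real \<Rightarrow> ennreal"
  assumes "0 < a" "0 < b" and [measurable]: "h \<in> borel_measurable lebesgue"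
  shows "(\<integral>\<^sup>+y\<in>{0<..}. (\<integral>\<^sup>+x\<in>{0<..}. ennreal (tent a b y x) * h x \<partial>lebesgue) * ennreal (y powr -1) \<partial>lebesgue)
       = ennreal (1/a + 1/b) * (\<integral>\<^sup>+x\<in>{0<..}. h x \<partial>lebesgue)"
proof -
  interpret pair_sigma_finite "lebesgue :: real measure" "lebesgue :: real measure"
    by (intro pair_sigma_finite.intro sigma_finite_lebesgue)
  define w where "w y = ennreal (y powr -1) * indicator {0<..} y" for y :: real
  have [measurable]: "w \<in> borel_measurable lebesgue"
    unfolding w_def by measurable
  have split_weight: "ennreal (tent a b y x * y powr -1) = ennreal (tent a b y x) * ennreal (y powr -1)"
    for x y :: real
    by (rule ennreal_mult) (simp_all add: tent_nonneg)
  have pull_in: "(\<integral>\<^sup>+x\<in>{0<..}. ennreal (tent a b y x) * h x \<partial>lebesgue) * w y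
      = (\<integral>\<^sup>+x. ennreal (tent a b y x) * h x * indicator {0<..} x * w y \<partial>lebesgue)" for y
    by (rule nn_integral_multc[symmetric]) measurable
  have "(\<integral>\<^sup>+y\<in>{0<..}. (\<integral>\<^sup>+x\<in>{0<..}. ennreal (tent a b y x) * h x \<partial>lebesgue) * ennreal (y powr -1) \<partial>lebesgue)
      = (\<integral>\<^sup>+y. (\<integral>\<^sup>+x\<in>{0<..}. ennreal (tent a b y x) * h x \<partial>lebesgue) * w y \<partial>lebesgue)"
    by (simp only: w_def mult.assoc)
  also have "\<dots> = (\<integral>\<^sup>+y. (\<integral>\<^sup>+x. ennreal (tent a b y x) * h x * indicator {0<..} x * w y \<partial>lebesgue) \<partial>lebesgue)"
    by (rule nn_integral_cong) (rule pull_in)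
  also have "\<dots> = (\<integral>\<^sup>+x. (\<integral>\<^sup>+y. ennreal (tent a b y x) * h x * indicator {0<..} x * w y \<partial>lebesgue) \<partial>lebesgue)"
    by (rule Fubini') measurable
  also have "\<dots> = (\<integral>\<^sup>+x. h x * indicator {0<..} x
            * (\<integral>\<^sup>+y\<in>{0<..}. ennreal (tent a b y x * y powr -1) \<partial>lebesgue) \<partial>lebesgue)"
    unfolding split_weight by (subst nn_integral_cmult[symmetric]) (auto intro!: nn_integral_cong simp: w_def mult_ac)
  also have "\<dots> = (\<integral>\<^sup>+x. h x * indicator {0<..} x * ennreal (1/a + 1/b) \<partial>lebesgue)"
  proof (rule nn_integral_cong)
    fix x :: real
    show "h x * indicator {0<..} x * (\<integral>\<^sup>+y\<in>{0<..}. ennreal (tent a b y x * y powr -1) \<partial>lebesgue)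
        = h x * indicator {0<..} x * ennreal (1/a + 1/b)"
    proof (cases "0 < x")
      case True
      then show ?thesis by (simp only: nn_integral_tent_Haar_first[OF assms(1,2) True])
    next
      case False
      then have "indicator {0<..} x = (0 :: ennreal)" by simp
      then show ?thesis by (simp only: mult_zero_right mult_zero_left)
    qed
  qed
  also have "\<dots> = (\<integral>\<^sup>+x\<in>{0<..}. h x \<partial>lebesgue) * ennreal (1/a + 1/b)"
    by (rule nn_integral_multc) measurable
  finally show ?thesis by (simp only: mult.commute[of "ennreal (1/a + 1/b)"])
qed

lemma powr_prod3_split:
  fixes k g x r p \<theta> \<phi> \<psi> :: real
  assumes "0 < k" "0 \<le> g" "0 < x" "0 < \<theta>"
    and "r * (\<theta> + \<phi>) = 1" "p * (\<theta> + \<psi>) = 1" "\<theta> + \<phi> + \<psi> = 1"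
  shows "k * g * x powr -1 = (k powr r * g powr p * x powr -1) powr \<theta> * (k powr r * x powr -1) powr \<phi>
          * (g powr p * x powr -1) powr \<psi>"
proof (cases "g = 0")
  case True
  then show ?thesis using assms by simp
next
  case False
  then have g: "0 < g" using assms by simp
  have "(k powr r * g powr p * x powr -1) powr \<theta> * (k powr r * x powr -1) powr \<phi> * (g powr p * x powr -1) powr \<psi>
      = exp (\<theta> * (r * ln k + p * ln g - ln x) + \<phi> * (r * ln k - ln x) + \<psi> * (p * ln g - ln x))"
    using assms g by (simp add: powr_def ln_mult exp_add[symmetric] algebra_simps)
  also have "\<theta> * (r * ln k + p * ln g - ln x) + \<phi> * (r * ln k - ln x) + \<psi> * (p * ln g - ln x)
      = (r * (\<theta> + \<phi>)) * ln k + (p * (\<theta> + \<psi>)) * ln g - (\<theta> + \<phi> + \<psi>) * ln x"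
    by (simp add: algebra_simps)
  also have "exp \<dots> = k * g * x powr -1"
    using assms g by (simp add: exp_add exp_diff powr_minus divide_inverse)
  finally show ?thesis ..
qed

lemma nn_integral_tent_le_Holder:
  fixes g :: "real \<Rightarrow> real"
  assumes "1 \<le> p" "p \<le> q" and r: "r * (1 + 1/q - 1/p) = 1" and "0 < a" "0 < b" "0 < y"
    and [measurable]: "g \<in> borel_measurable lebesgue" and g_nonneg: "\<And>x. 0 \<le> g x"
    and N: "(\<integral>\<^sup>+x\<in>{0<..}. ennreal (g x powr p * x powr -1) \<partial>lebesgue) = ennreal N" "0 \<le> N"
  shows "(\<integral>\<^sup>+x\<in>{0<..}. ennreal (tent a b y x * g x * x powr -1) \<partial>lebesgue)
    \<le> ennreal (enn2real (\<integral>\<^sup>+x\<in>{0<..}. ennreal (tent a b y x powr r * g x powr p * x powr -1) \<partial>lebesgue)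
          powr (1/q) * (1/(a*r) + 1/(b*r)) powr (1 - 1/p) * N powr (1/p - 1/q))"
proof -
  have p: "0 < p" "1/p \<le> 1" and q: "0 < q" "1/q \<le> 1/p"
    using assms by (simp_all add: divide_left_mono)
  moreover have "0 < 1/q" using q by simp
  ultimately have "0 < 1 + 1/q - 1/p" by linarith
  then have r_pos: "0 < r" using r zero_less_mult_iff[of r "1 + 1/q - 1/p"] by auto
  define F1 where "F1 x = indicator {0<..} x * (tent a b y x powr r * g x powr p * x powr -1)" for x
  define F2 where "F2 x = indicator {0<..} x * (tent a b y x powr r * x powr -1)" for x
  define F3 where "F3 x = indicator {0<..} x * (g x powr p * x powr -1)" for x
  have [measurable]: "F1 \<in> borel_measurable lebesgue"
    unfolding F1_def by measurable
  have [measurable]: "F2 \<in> borel_measurable lebesgue"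
    unfolding F2_def by measurable
  have [measurable]: "F3 \<in> borel_measurable lebesgue"
    unfolding F3_def by measurable
  have F_nonneg: "0 \<le> F1 x" "0 \<le> F2 x" "0 \<le> F3 x" for x
    by (simp_all add: F1_def F2_def F3_def)
  have I3: "(\<integral>\<^sup>+x. F3 x \<partial>lebesgue) = ennreal N"
    unfolding N(1)[symmetric] by (intro nn_integral_cong) (simp add: F3_def indicator_def)
  have "(\<integral>\<^sup>+x. F2 x \<partial>lebesgue)
      = (\<integral>\<^sup>+x\<in>{0<..}. ennreal (tent (a * r) (b * r) y x * x powr -1) \<partial>lebesgue)"
    using \<open>0 < y\<close> by (intro nn_integral_cong) (simp add: F2_def indicator_def tent_powr)
  also have "\<dots> = ennreal (1/(a*r) + 1/(b*r))"
    using assms r_pos by (intro nn_integral_tent_Haar) auto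
  finally have I2: "(\<integral>\<^sup>+x. F2 x \<partial>lebesgue) = ennreal (1/(a*r) + 1/(b*r))" .
  define J where "J = enn2real (\<integral>\<^sup>+x. F1 x \<partial>lebesgue)"
  have F1_le: "F1 x \<le> F3 x" for x
  proof (cases "0 < x")
    case True
    then have "tent a b y x powr r \<le> 1"
      using assms r_pos tent_le_one[of "a * r" "b * r" y x] by (simp add: tent_powr)
    from mult_right_mono[OF this, of "g x powr p * x powr -1"]
    show ?thesis using True by (simp add: F1_def F3_def mult.assoc)
  qed (simp add: F1_def F3_def)
  have "(\<integral>\<^sup>+x. F1 x \<partial>lebesgue) \<le> ennreal N"
    unfolding I3[symmetric] by (intro nn_integral_mono ennreal_leI F1_le)
  then have I1: "(\<integral>\<^sup>+x. F1 x \<partial>lebesgue) = ennreal J"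
    unfolding J_def using ennreal_less_top le_less_trans by (metis ennreal_enn2real)
  have "(\<integral>\<^sup>+x\<in>{0<..}. ennreal (tent a b y x * g x * x powr -1) \<partial>lebesgue)
      = (\<integral>\<^sup>+x. F1 x powr (1/q) * F2 x powr (1 - 1/p) * F3 x powr (1/p - 1/q) \<partial>lebesgue)"
  proof (intro nn_integral_cong)
    fix x :: real
    have "tent a b y x * g x * x powr -1 = (tent a b y x powr r * g x powr p * x powr -1) powr (1/q)
        * (tent a b y x powr r * x powr -1) powr (1 - 1/p) * (g x powr p * x powr -1) powr (1/p - 1/q)"
      if "0 < x"
      using that assms r p q by (intro powr_prod3_split) (auto simp: tent_pos algebra_simps)
    then show "ennreal (tent a b y x * g x * x powr -1) * indicator {0<..} x
        = ennreal (F1 x powr (1/q) * F2 x powr (1 - 1/p) * F3 x powr (1/p - 1/q))"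
      using q by (cases "0 < x") (simp_all add: F1_def F2_def F3_def)
  qed
  also have "\<dots> \<le> ennreal (J powr (1/q) * (1/(a*r) + 1/(b*r)) powr (1 - 1/p) * N powr (1/p - 1/q))"
    using p q r_pos assms
    by (intro nn_integral_powr_prod3_le[OF _ _ _ F_nonneg _ _ _ _ I1 I2 I3]) (auto simp: J_def)
  finally show ?thesis by (simp add: J_def F1_def mult_ac indicator_mult_ennreal)
qed

lemma nn_integral_tent_iterated_le:
  fixes g :: "real \<Rightarrow> real"
  assumes "0 < a" "0 < b" "0 < r" "0 \<le> C"
    and [measurable]: "g \<in> borel_measurable lebesgue"
    and N: "(\<integral>\<^sup>+x\<in>{0<..}. ennreal (g x powr p * x powr -1) \<partial>lebesgue) = ennreal N"
  shows "(\<integral>\<^sup>+y\<in>{0<..}. ennreal (C * enn2real (\<integral>\<^sup>+x\<in>{0<..}. ennreal (tent a b y x powr r * g x powr p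
            * x powr -1) \<partial>lebesgue) * y powr -1) \<partial>lebesgue)
    \<le> ennreal C * (ennreal (1/(a*r) + 1/(b*r)) * ennreal N)"
proof -
  define I where "I y = (\<integral>\<^sup>+x\<in>{0<..}. ennreal (tent a b y x powr r * g x powr p * x powr -1) \<partial>lebesgue)"
    for y
  define h where "h x = ennreal C * ennreal (g x powr p * x powr -1)" for x
  have [measurable]: "h \<in> borel_measurable lebesgue"
    unfolding h_def by measurable
  have I_eq: "ennreal C * I y = (\<integral>\<^sup>+x\<in>{0<..}. ennreal (tent (a * r) (b * r) y x) * h x \<partial>lebesgue)"
    if "0 < y" for y
  proof -
    have "I y = (\<integral>\<^sup>+x\<in>{0<..}. ennreal (tent (a * r) (b * r) y x) * ennreal (g x powr p * x powr -1) \<partial>lebesgue)"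
      unfolding I_def using that
      by (intro nn_integral_cong) (simp add: indicator_def tent_powr ennreal_mult[symmetric] tent_nonneg mult.assoc)
    then show ?thesis
      by (simp add: h_def nn_integral_cmult[symmetric] mult_ac)
  qed
  have pointwise: "ennreal (C * enn2real (I y) * y powr -1) * indicator {0<..} y
      \<le> (\<integral>\<^sup>+x\<in>{0<..}. ennreal (tent (a * r) (b * r) y x) * h x \<partial>lebesgue) * ennreal (y powr -1)
        * indicator {0<..} y" for y
  proof (cases "0 < y")
    case True
    have "ennreal (C * enn2real (I y) * y powr -1) = ennreal C * ennreal (enn2real (I y)) * ennreal (y powr -1)"
      using \<open>0 \<le> C\<close> by (simp only: ennreal_mult enn2real_nonneg powr_ge_zero mult_nonneg_nonneg)
    also have "\<dots> \<le> ennreal C * I y * ennreal (y powr -1)"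
      by (intro mult_right_mono mult_left_mono) (simp_all add: ennreal_enn2real_if)
    finally show ?thesis using True by (simp add: I_eq)
  qed simp
  have "(\<integral>\<^sup>+y\<in>{0<..}. ennreal (C * enn2real (I y) * y powr -1) \<partial>lebesgue)
      \<le> (\<integral>\<^sup>+y\<in>{0<..}. (\<integral>\<^sup>+x\<in>{0<..}. ennreal (tent (a * r) (b * r) y x) * h x \<partial>lebesgue)
          * ennreal (y powr -1) \<partial>lebesgue)"
    by (intro nn_integral_mono pointwise)
  also have "\<dots> = ennreal (1/(a*r) + 1/(b*r)) * (\<integral>\<^sup>+x\<in>{0<..}. h x \<partial>lebesgue)"
    by (rule nn_integral_tent_Fubini) (use assms in auto)
  also have "(\<integral>\<^sup>+x\<in>{0<..}. h x \<partial>lebesgue) = ennreal C * ennreal N"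
    unfolding N[symmetric] h_def mult.assoc by (rule nn_integral_cmult) measurable
  finally show ?thesis
    unfolding I_def by (simp only: mult_ac)
qed

lemma tent_convolution_bound:
  fixes g :: "real \<Rightarrow> real"
  assumes "1 \<le> p" "p \<le> q" "0 < a" "0 < b"
    and [measurable]: "g \<in> borel_measurable lebesgue" and g_nonneg: "\<And>x. 0 \<le> g x"
    and N: "(\<integral>\<^sup>+x\<in>{0<..}. ennreal (g x powr p * x powr -1) \<partial>lebesgue) = ennreal N" "0 \<le> N"
  obtains G :: "real \<Rightarrow> real" where
    "\<And>y. 0 < y \<Longrightarrow> (\<integral>\<^sup>+x\<in>{0<..}. ennreal (tent a b y x * g x * x powr -1) \<partial>lebesgue) \<le> ennreal (G y)"
    "\<And>y. 0 \<le> G y" "G \<in> borel_measurable lebesgue"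
    "(\<integral>\<^sup>+y\<in>{0<..}. ennreal (G y powr q * y powr -1) \<partial>lebesgue)
       \<le> ennreal (((1/a + 1/b) * (1 + 1/q - 1/p)) powr ((1 - 1/p) * q + 1) * N powr (q / p))"
proof -
  have p: "0 < p" "1/p \<le> 1" and q: "0 < q" "0 < 1/q"
    using assms by simp_all
  then have "0 < 1 + 1/q - 1/p" by linarith
  define r where "r = 1 / (1 + 1/q - 1/p)"
  have r: "r * (1 + 1/q - 1/p) = 1" "0 < r"
    using \<open>0 < 1 + 1/q - 1/p\<close> by (simp_all add: r_def)
  define K where "K = 1/(a*r) + 1/(b*r)"
  have K_pos: "0 < K"
    unfolding K_def using assms r by (intro add_pos_pos) simp_all
  define I where "I y = (\<integral>\<^sup>+x\<in>{0<..}. ennreal (tent a b y x powr r * g x powr p * x powr -1) \<partial>lebesgue)"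
    for y
  define G where "G y = enn2real (I y) powr (1/q) * K powr (1 - 1/p) * N powr (1/p - 1/q)" for y
  define C where "C = K powr ((1 - 1/p) * q) * N powr ((1/p - 1/q) * q)"
  have "G y powr q * y powr -1 = C * enn2real (I y) * y powr -1" for y
    using q K_pos N(2) by (simp add: G_def C_def powr_mult powr_powr powr_one mult_ac)
  then have "(\<integral>\<^sup>+y\<in>{0<..}. ennreal (G y powr q * y powr -1) \<partial>lebesgue) \<le> ennreal C * (ennreal K * ennreal N)"
    unfolding I_def K_def using assms r by (simp only:) (rule nn_integral_tent_iterated_le, auto simp: C_def)
  also have "\<dots> = ennreal (K powr ((1 - 1/p) * q + 1) * N powr (q / p))"
  proof -
    have "C * (K * N) = K powr ((1 - 1/p) * q + 1) * N powr ((1/p - 1/q) * q + 1)"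
      using K_pos N(2) by (cases "N = 0") (simp_all add: C_def powr_add)
    also have "(1/p - 1/q) * q + 1 = q / p"
      using p q by (simp add: field_simps)
    finally have "C * (K * N) = K powr ((1 - 1/p) * q + 1) * N powr (q / p)" .
    then show ?thesis
      using K_pos N(2) by (metis C_def ennreal_mult mult_nonneg_nonneg powr_ge_zero less_imp_le)
  qed
  also have "K = (1/a + 1/b) * (1 + 1/q - 1/p)"
    using assms r by (simp add: K_def r_def field_simps)
  finally have "(\<integral>\<^sup>+y\<in>{0<..}. ennreal (G y powr q * y powr -1) \<partial>lebesgue)
       \<le> ennreal (((1/a + 1/b) * (1 + 1/q - 1/p)) powr ((1 - 1/p) * q + 1) * N powr (q / p))" .
  moreover have "(\<integral>\<^sup>+x\<in>{0<..}. ennreal (tent a b y x * g x * x powr -1) \<partial>lebesgue) \<le> ennreal (G y)"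
    if "0 < y" for y
    unfolding G_def I_def K_def
    by (rule nn_integral_tent_le_Holder[OF assms(1,2) r(1) assms(3,4) that _ g_nonneg N]) simp
  moreover have "0 \<le> G y" for y
    by (simp add: G_def)
  moreover have "G \<in> borel_measurable lebesgue"
  proof -
    interpret sigma_finite_measure "lebesgue :: real measure"
      by (rule sigma_finite_lebesgue)
    show ?thesis unfolding G_def I_def by measurable
  qed
  ultimately show ?thesis using that by blast
qed

section \<open>Sufficiency\<close>

lemma Hkernel_le_tent:
  assumes x: "0 < x" and y: "0 < y" and lam: "lam = \<mu> + \<nu> + 1 + B - A"
  shows "Hkernel lam \<mu> \<nu> x y \<le> 2 powr \<bar>lam\<bar> * y powr -B * (tent (\<mu> + 1 - A) (\<nu> + B) y x * x powr A * x powr -1)"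
proof -
  have "(x + y) powr -lam \<le> 2 powr \<bar>-lam\<bar> * max x y powr -lam"
    using x y by (intro powr_bounds_of_comparable(1)) auto
  moreover have "Hkernel lam \<mu> \<nu> x y = x powr \<mu> * y powr \<nu> * (x + y) powr -lam"
    unfolding Hkernel_def by (simp add: powr_minus divide_inverse)
  ultimately have "Hkernel lam \<mu> \<nu> x y \<le> 2 powr \<bar>lam\<bar> * (x powr \<mu> * y powr \<nu> * max x y powr -lam)"
    by (simp add: mult_left_mono mult_ac)
  also have "x powr \<mu> * y powr \<nu> * max x y powr -lam = y powr -B * (tent (\<mu> + 1 - A) (\<nu> + B) y x * x powr A * x powr -1)"
  proof (cases "x \<le> y")
    case True
    then show ?thesis
      using x y by (simp add: tent_def max_def powr_def ln_div exp_add[symmetric] lam algebra_simps)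
  next
    case False
    then show ?thesis
      using x y by (simp add: tent_def max_def powr_def ln_div exp_add[symmetric] lam algebra_simps)
  qed
  finally show ?thesis by (simp only: mult.assoc)
qed

lemma measurable_Hkernel_times:
  assumes "set_borel_measurable lebesgue {0<..} f"
  shows "(\<lambda>x. indicator {0<..} x *\<^sub>R (Hkernel lam \<mu> \<nu> x y * f x)) \<in> borel_measurable lebesgue"
proof -
  have [measurable]: "(\<lambda>x. indicator {0<..} x *\<^sub>R f x) \<in> borel_measurable lebesgue"
    using assms unfolding set_borel_measurable_def .
  have "(\<lambda>x. Hkernel lam \<mu> \<nu> x y * (indicator {0<..} x *\<^sub>R f x)) \<in> borel_measurable lebesgue"
    unfolding Hkernel_def by measurable
  then show ?thesis
    by (simp add: mult.left_commute)
qed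

lemma Hop_measurable:
  assumes "set_borel_measurable lebesgue {0<..} f"
  shows "Hop lam \<mu> \<nu> f \<in> borel_measurable lebesgue"
proof -
  interpret sigma_finite_measure "lebesgue :: real measure"
    by (rule sigma_finite_lebesgue)
  have [measurable]: "(\<lambda>x. indicator {0<..} x *\<^sub>R f x) \<in> borel_measurable lebesgue"
    using assms unfolding set_borel_measurable_def .
  have "(\<lambda>y. \<integral>x. Hkernel lam \<mu> \<nu> x y * (indicator {0<..} x *\<^sub>R f x) \<partial>lebesgue) \<in> borel_measurable lebesgue"
    by (rule borel_measurable_lebesgue_integral) (unfold Hkernel_def, measurable)
  then show ?thesis
    unfolding Hop_def[abs_def] set_lebesgue_integral_def by (simp add: mult.left_commute)
qed

lemma Hop_set_integrable_abs_le:
  assumes f: "set_borel_measurable lebesgue {0<..} f" and "0 \<le> M"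
    and bound: "(\<integral>\<^sup>+x\<in>{0<..}. ennreal \<bar>Hkernel lam \<mu> \<nu> x y * f x\<bar> \<partial>lebesgue) \<le> ennreal M"
  shows "set_integrable lebesgue {0<..} (\<lambda>x. Hkernel lam \<mu> \<nu> x y * f x)"
    and "\<bar>Hop lam \<mu> \<nu> f y\<bar> \<le> M"
proof -
  have norm_eq: "(\<integral>\<^sup>+x. ennreal (norm (indicator {0<..} x *\<^sub>R (Hkernel lam \<mu> \<nu> x y * f x))) \<partial>lebesgue)
      = (\<integral>\<^sup>+x\<in>{0<..}. ennreal \<bar>Hkernel lam \<mu> \<nu> x y * f x\<bar> \<partial>lebesgue)"
    by (intro nn_integral_cong) (simp add: indicator_def)
  show integrable: "set_integrable lebesgue {0<..} (\<lambda>x. Hkernel lam \<mu> \<nu> x y * f x)"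
    unfolding set_integrable_def integrable_iff_bounded norm_eq
    using measurable_Hkernel_times[OF f] bound by (simp add: le_less_trans)
  have "ennreal \<bar>Hop lam \<mu> \<nu> f y\<bar>
      \<le> (\<integral>\<^sup>+x. ennreal (norm (indicator {0<..} x *\<^sub>R (Hkernel lam \<mu> \<nu> x y * f x))) \<partial>lebesgue)"
    using integral_norm_bound_ennreal[OF integrable[unfolded set_integrable_def]]
    by (simp add: Hop_def set_lebesgue_integral_def)
  also have "\<dots> \<le> ennreal M"
    unfolding norm_eq by (rule bound)
  finally show "\<bar>Hop lam \<mu> \<nu> f y\<bar> \<le> M"
    using \<open>0 \<le> M\<close> by (simp add: ennreal_le_iff)
qed

lemma Lpw_wnorm_le:
  assumes [measurable]: "h \<in> borel_measurable lebesgue" and "0 < q" "0 \<le> M"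
    and bound: "(\<integral>\<^sup>+y\<in>{0<..}. ennreal (\<bar>h y\<bar> powr q * y powr \<beta>) \<partial>lebesgue) \<le> ennreal M"
  shows "Lpw q \<beta> h" and "wnorm q \<beta> h \<le> M powr (1/q)"
proof -
  show "Lpw q \<beta> h"
    unfolding Lpw_def set_borel_measurable_def using bound by (simp add: le_less_trans)
  have "enn2real (\<integral>\<^sup>+y\<in>{0<..}. ennreal (\<bar>h y\<bar> powr q * y powr \<beta>) \<partial>lebesgue) \<le> M"
    using bound \<open>0 \<le> M\<close> by (simp add: enn2real_leI)
  then show "wnorm q \<beta> h \<le> M powr (1/q)"
    unfolding wnorm_def using \<open>0 < q\<close> by (intro powr_mono2) auto
qed

lemma Hop_tent_bound:
  assumes lam: "lam = \<mu> + \<nu> + 1 + B - A" and [measurable]: "f \<in> borel_measurable lebesgue"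
    and "0 < y" "0 \<le> M"
    and bound: "(\<integral>\<^sup>+x\<in>{0<..}. ennreal (tent (\<mu> + 1 - A) (\<nu> + B) y x * (\<bar>f x\<bar> * x powr A) * x powr -1)
        \<partial>lebesgue) \<le> ennreal M"
  shows "set_integrable lebesgue {0<..} (\<lambda>x. Hkernel lam \<mu> \<nu> x y * f x)"
    and "\<bar>Hop lam \<mu> \<nu> f y\<bar> \<le> 2 powr \<bar>lam\<bar> * y powr -B * M"
proof -
  define c where "c = 2 powr \<bar>lam\<bar> * y powr -B"
  have c: "0 \<le> c" by (simp add: c_def)
  have "ennreal \<bar>Hkernel lam \<mu> \<nu> x y * f x\<bar> * indicator {0<..} x
      \<le> ennreal c * (ennreal (tent (\<mu> + 1 - A) (\<nu> + B) y x * (\<bar>f x\<bar> * x powr A) * x powr -1)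
          * indicator {0<..} x)" for x
  proof (cases "0 < x")
    case True
    have "\<bar>Hkernel lam \<mu> \<nu> x y * f x\<bar> = Hkernel lam \<mu> \<nu> x y * \<bar>f x\<bar>"
      by (simp add: Hkernel_def abs_mult)
    also have "\<dots> \<le> c * (tent (\<mu> + 1 - A) (\<nu> + B) y x * x powr A * x powr -1) * \<bar>f x\<bar>"
      unfolding c_def using Hkernel_le_tent[OF True \<open>0 < y\<close> lam] by (intro mult_right_mono) auto
    finally show ?thesis
      using True c by (simp add: ennreal_mult[symmetric] tent_nonneg mult_ac ennreal_leI)
  qed simp
  then have "(\<integral>\<^sup>+x\<in>{0<..}. ennreal \<bar>Hkernel lam \<mu> \<nu> x y * f x\<bar> \<partial>lebesgue)
      \<le> ennreal c * (\<integral>\<^sup>+x\<in>{0<..}. ennreal (tent (\<mu> + 1 - A) (\<nu> + B) y x * (\<bar>f x\<bar> * x powr A) * x powr -1)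
          \<partial>lebesgue)"
    by (subst nn_integral_cmult[symmetric]) (measurable, intro nn_integral_mono)
  also have "\<dots> \<le> ennreal c * ennreal M"
    by (rule mult_left_mono[OF bound]) simp
  also have "\<dots> = ennreal (c * M)"
    using c \<open>0 \<le> M\<close> by (simp add: ennreal_mult)
  finally have "(\<integral>\<^sup>+x\<in>{0<..}. ennreal \<bar>Hkernel lam \<mu> \<nu> x y * f x\<bar> \<partial>lebesgue) \<le> ennreal (c * M)" .
  from Hop_set_integrable_abs_le[OF _ _ this] c \<open>0 \<le> M\<close>
  show "set_integrable lebesgue {0<..} (\<lambda>x. Hkernel lam \<mu> \<nu> x y * f x)"
    and "\<bar>Hop lam \<mu> \<nu> f y\<bar> \<le> 2 powr \<bar>lam\<bar> * y powr -B * M"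
    by (simp_all add: c_def set_borel_measurable_def)
qed

lemma nn_integral_weighted_le_Haar:
  fixes h G :: "real \<Rightarrow> real"
  assumes "0 < q" "0 \<le> c" "B * q = \<beta> + 1"
    and [measurable]: "G \<in> borel_measurable lebesgue" and G_nonneg: "\<And>y. 0 \<le> G y"
    and le: "\<And>y. 0 < y \<Longrightarrow> \<bar>h y\<bar> \<le> c * y powr -B * G y"
  shows "(\<integral>\<^sup>+y\<in>{0<..}. ennreal (\<bar>h y\<bar> powr q * y powr \<beta>) \<partial>lebesgue)
    \<le> ennreal (c powr q) * (\<integral>\<^sup>+y\<in>{0<..}. ennreal (G y powr q * y powr -1) \<partial>lebesgue)"
proof -
  have "ennreal (\<bar>h y\<bar> powr q * y powr \<beta>) * indicator {0<..} y
      \<le> ennreal (c powr q) * (ennreal (G y powr q * y powr -1) * indicator {0<..} y)" for y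
  proof (cases "0 < y")
    case True
    have "\<bar>h y\<bar> powr q * y powr \<beta> \<le> (c * y powr -B * G y) powr q * y powr \<beta>"
      using le[OF True] assms by (intro mult_right_mono powr_mono2) auto
    also have "\<dots> = c powr q * G y powr q * (y powr (-B * q) * y powr \<beta>)"
      using True G_nonneg \<open>0 \<le> c\<close> by (simp add: powr_mult powr_powr mult_ac)
    also have "y powr (-B * q) * y powr \<beta> = y powr -1"
      using assms by (simp add: powr_add[symmetric])
    finally show ?thesis
      using True G_nonneg by (simp add: ennreal_mult[symmetric] mult.assoc ennreal_leI)
  qed simp
  then show ?thesis
    by (subst nn_integral_cmult[symmetric]) (measurable, intro nn_integral_mono)
qed

lemma Hop_weighted_norm_bound:
  fixes f :: "real \<Rightarrow> real"
  assumes "1 \<le> p" "p \<le> q"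
    and lam: "lam = \<mu> + \<nu> + 1 + B - A" and A: "A * p = \<alpha> + 1" and B: "B * q = \<beta> + 1"
    and s: "0 < \<mu> + 1 - A" "0 < \<nu> + B"
    and [measurable]: "f \<in> borel_measurable lebesgue"
    and N: "(\<integral>\<^sup>+x\<in>{0<..}. ennreal (\<bar>f x\<bar> powr p * x powr \<alpha>) \<partial>lebesgue) = ennreal N" "0 \<le> N"
  defines "D \<equiv> ((1/(\<mu> + 1 - A) + 1/(\<nu> + B)) * (1 + 1/q - 1/p)) powr ((1 - 1/p) * q + 1)"
  shows "\<And>y. 0 < y \<Longrightarrow> set_integrable lebesgue {0<..} (\<lambda>x. Hkernel lam \<mu> \<nu> x y * f x)"
    and "Lpw q \<beta> (Hop lam \<mu> \<nu> f)"
    and "wnorm q \<beta> (Hop lam \<mu> \<nu> f) \<le> 2 powr \<bar>lam\<bar> * D powr (1/q) * N powr (1/p)"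
proof -
  have p: "0 < p" and q: "0 < q" using assms by auto
  have g_meas: "(\<lambda>x. \<bar>f x\<bar> * x powr A) \<in> borel_measurable lebesgue"
    by measurable
  have g_nonneg: "0 \<le> \<bar>f x\<bar> * x powr A" for x
    by simp
  have g_N: "(\<integral>\<^sup>+x\<in>{0<..}. ennreal ((\<bar>f x\<bar> * x powr A) powr p * x powr -1) \<partial>lebesgue) = ennreal N"
    unfolding N(1)[symmetric]
  proof (intro nn_integral_cong)
    fix x :: real
    have "(\<bar>f x\<bar> * x powr A) powr p * x powr -1 = \<bar>f x\<bar> powr p * x powr \<alpha>" if "0 < x"
      using that by (simp add: powr_mult powr_powr A powr_add)
    then show "ennreal ((\<bar>f x\<bar> * x powr A) powr p * x powr -1) * indicator {0<..} x
        = ennreal (\<bar>f x\<bar> powr p * x powr \<alpha>) * indicator {0<..} x"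
      by (cases "0 < x") simp_all
  qed
  obtain G where G_bound: "\<And>y. 0 < y \<Longrightarrow>
        (\<integral>\<^sup>+x\<in>{0<..}. ennreal (tent (\<mu> + 1 - A) (\<nu> + B) y x * (\<bar>f x\<bar> * x powr A) * x powr -1) \<partial>lebesgue) \<le> ennreal (G y)"
    and G_nonneg: "\<And>y. 0 \<le> G y" and [measurable]: "G \<in> borel_measurable lebesgue"
    and G_int: "(\<integral>\<^sup>+y\<in>{0<..}. ennreal (G y powr q * y powr -1) \<partial>lebesgue) \<le> ennreal (D * N powr (q / p))"
    using tent_convolution_bound[OF assms(1,2) s g_meas g_nonneg g_N N(2)] unfolding D_def by blast
  define c where "c = 2 powr \<bar>lam\<bar>"
  have Hop_le: "\<bar>Hop lam \<mu> \<nu> f y\<bar> \<le> c * y powr -B * G y" if "0 < y" for y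
    using Hop_tent_bound(2)[OF lam _ that G_nonneg G_bound[OF that]] by (simp add: c_def)
  show "\<And>y. 0 < y \<Longrightarrow> set_integrable lebesgue {0<..} (\<lambda>x. Hkernel lam \<mu> \<nu> x y * f x)"
    using Hop_tent_bound(1)[OF lam _ _ G_nonneg G_bound] by simp
  have "(\<integral>\<^sup>+y\<in>{0<..}. ennreal (\<bar>Hop lam \<mu> \<nu> f y\<bar> powr q * y powr \<beta>) \<partial>lebesgue)
      \<le> ennreal (c powr q) * (\<integral>\<^sup>+y\<in>{0<..}. ennreal (G y powr q * y powr -1) \<partial>lebesgue)"
    using q B G_nonneg Hop_le by (intro nn_integral_weighted_le_Haar) (simp_all add: c_def)
  also have "\<dots> \<le> ennreal (c powr q * (D * N powr (q / p)))"
    using G_int by (simp add: ennreal_mult mult_left_mono D_def)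
  finally have bound: "(\<integral>\<^sup>+y\<in>{0<..}. ennreal (\<bar>Hop lam \<mu> \<nu> f y\<bar> powr q * y powr \<beta>) \<partial>lebesgue)
      \<le> ennreal (c powr q * (D * N powr (q / p)))" .
  have [measurable]: "Hop lam \<mu> \<nu> f \<in> borel_measurable lebesgue"
    by (rule Hop_measurable) (simp add: set_borel_measurable_def)
  show "Lpw q \<beta> (Hop lam \<mu> \<nu> f)"
    using Lpw_wnorm_le(1)[OF _ q _ bound] by (simp add: D_def)
  have "wnorm q \<beta> (Hop lam \<mu> \<nu> f) \<le> (c powr q * (D * N powr (q / p))) powr (1/q)"
    using Lpw_wnorm_le(2)[OF _ q _ bound] by (simp add: D_def)
  also have "\<dots> = c * D powr (1/q) * N powr (1/p)"
    using q N(2) by (simp add: c_def D_def powr_mult powr_powr)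
  finally show "wnorm q \<beta> (Hop lam \<mu> \<nu> f) \<le> 2 powr \<bar>lam\<bar> * D powr (1/q) * N powr (1/p)"
    by (simp add: c_def)
qed

lemma H_bounded_if:
  fixes p q lam \<mu> \<nu> \<alpha> \<beta> :: real
  assumes "1 \<le> p" "p \<le> q"
    and lam: "lam = \<mu> + \<nu> + 1 + (\<beta> + 1) / q - (\<alpha> + 1) / p"
    and "- q * \<nu> < \<beta> + 1" "\<beta> + 1 < q * (lam - \<nu>)"
  shows "H_bounded lam \<mu> \<nu> p \<alpha> q \<beta>"
proof -
  have p: "0 < p" and q: "0 < q" using assms by auto
  define A where "A = (\<alpha> + 1) / p"
  define B where "B = (\<beta> + 1) / q"
  have A: "A * p = \<alpha> + 1" and B: "B * q = \<beta> + 1"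
    using p q by (simp_all add: A_def B_def)
  have lam_AB: "lam = \<mu> + \<nu> + 1 + B - A"
    using lam by (simp add: A_def B_def)
  have "-\<nu> < B" "B < lam - \<nu>"
    using assms q by (simp_all add: B_def divide_simps mult.commute)
  then have s: "0 < \<mu> + 1 - A" "0 < \<nu> + B"
    using lam_AB by linarith+
  define D where "D = ((1/(\<mu> + 1 - A) + 1/(\<nu> + B)) * (1 + 1/q - 1/p)) powr ((1 - 1/p) * q + 1)"
  show ?thesis
    unfolding H_bounded_def
  proof (intro exI[of _ "2 powr \<bar>lam\<bar> * D powr (1/q)"] allI impI conjI)
    fix f :: "real \<Rightarrow> real"
    assume "Lpw p \<alpha> f"
    then have [measurable]: "(\<lambda>x. indicator {0<..} x * f x) \<in> borel_measurable lebesgue"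
      and fin: "(\<integral>\<^sup>+x\<in>{0<..}. ennreal (\<bar>f x\<bar> powr p * x powr \<alpha>) \<partial>lebesgue) < \<infinity>"
      by (simp_all add: Lpw_def set_borel_measurable_def)
    define N where "N = enn2real (\<integral>\<^sup>+x\<in>{0<..}. ennreal (\<bar>f x\<bar> powr p * x powr \<alpha>) \<partial>lebesgue)"
    have N: "(\<integral>\<^sup>+x\<in>{0<..}. ennreal (\<bar>indicator {0<..} x * f x\<bar> powr p * x powr \<alpha>) \<partial>lebesgue) = ennreal N"
      "0 \<le> N"
      using fin by (auto simp: N_def indicator_def intro!: nn_integral_cong)
    have restrict: "indicator {0<..} x *\<^sub>R (Hkernel lam \<mu> \<nu> x y * (indicator {0<..} x * f x))
        = indicator {0<..} x *\<^sub>R (Hkernel lam \<mu> \<nu> x y * f x)" for x y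
      by (simp add: indicator_def)
    have Hop_restrict: "Hop lam \<mu> \<nu> (\<lambda>x. indicator {0<..} x * f x) = Hop lam \<mu> \<nu> f"
      unfolding Hop_def[abs_def] set_lebesgue_integral_def restrict ..
    note bound = Hop_weighted_norm_bound[OF assms(1,2) lam_AB A B s _ N, folded D_def]
    show "AE y\<in>{0<..} in lebesgue. set_integrable lebesgue {0<..} (\<lambda>x. Hkernel lam \<mu> \<nu> x y * f x)"
      using bound(1) unfolding set_integrable_def restrict by (intro AE_I2) auto
    show "Lpw q \<beta> (Hop lam \<mu> \<nu> f)"
      using bound(2) by (simp add: Hop_restrict)
    show "wnorm q \<beta> (Hop lam \<mu> \<nu> f) \<le> 2 powr \<bar>lam\<bar> * D powr (1/q) * wnorm p \<alpha> f"
      using bound(3) by (simp add: Hop_restrict wnorm_def N_def)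
  qed
qed

section \<open>Necessity\<close>

lemma Hkernel_ge:
  assumes "0 < t" "t \<le> x" "x \<le> c * t" "0 < s" "s \<le> x + y" "x + y \<le> c * s" "0 < y"
  shows "c powr -(\<bar>\<mu>\<bar> + \<bar>lam\<bar>) * t powr \<mu> * y powr \<nu> * s powr -lam \<le> Hkernel lam \<mu> \<nu> x y"
proof -
  have "0 < c * t" using assms by linarith
  then have c: "0 < c" using assms by (simp add: zero_less_mult_iff)
  have c_split: "c powr (-\<bar>\<mu>\<bar> - \<bar>lam\<bar>) = c powr -\<bar>\<mu>\<bar> * c powr -\<bar>lam\<bar>"
    by (simp add: powr_diff powr_minus divide_inverse)
  have "c powr -\<bar>\<mu>\<bar> * t powr \<mu> \<le> x powr \<mu>"
    using assms by (intro powr_bounds_of_comparable(2))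
  moreover have "c powr -\<bar>-lam\<bar> * s powr -lam \<le> (x + y) powr -lam"
    using assms by (intro powr_bounds_of_comparable(2))
  ultimately have "(c powr -\<bar>\<mu>\<bar> * t powr \<mu>) * (c powr -\<bar>lam\<bar> * s powr -lam) \<le> x powr \<mu> * (x + y) powr -lam"
    by (intro mult_mono) auto
  then have "(c powr -\<bar>\<mu>\<bar> * t powr \<mu>) * (c powr -\<bar>lam\<bar> * s powr -lam) * y powr \<nu>
      \<le> x powr \<mu> * (x + y) powr -lam * y powr \<nu>"
    by (rule mult_right_mono) simp
  moreover have "Hkernel lam \<mu> \<nu> x y = x powr \<mu> * (x + y) powr -lam * y powr \<nu>"
    by (simp add: Hkernel_def powr_minus divide_inverse mult_ac)
  ultimately show ?thesis
    by (simp add: c_split mult_ac)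
qed

lemma Lpw_indicator_dyadic:
  assumes "0 < p" "0 < t"
  shows "Lpw p \<alpha> (indicator {t..2*t})"
    and "wnorm p \<alpha> (indicator {t..2*t}) \<le> (2 powr \<bar>\<alpha>\<bar> * t powr (\<alpha> + 1)) powr (1/p)"
proof -
  have "(\<integral>\<^sup>+x\<in>{0<..}. ennreal (\<bar>indicator {t..2*t} x\<bar> powr p * x powr \<alpha>) \<partial>lebesgue)
      \<le> (\<integral>\<^sup>+x. ennreal (2 powr \<bar>\<alpha>\<bar> * t powr \<alpha>) * indicator {t..2*t} x \<partial>lebesgue)"
  proof (intro nn_integral_mono)
    fix x :: real
    have "x powr \<alpha> \<le> 2 powr \<bar>\<alpha>\<bar> * t powr \<alpha>" if "x \<in> {t..2*t}"
      using that assms by (intro powr_bounds_of_comparable(1)) auto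
    then show "ennreal (\<bar>indicator {t..2*t} x\<bar> powr p * x powr \<alpha>) * indicator {0<..} x
        \<le> ennreal (2 powr \<bar>\<alpha>\<bar> * t powr \<alpha>) * indicator {t..2*t} x"
      using assms by (cases "x \<in> {t..2*t}") (auto simp: indicator_def intro: ennreal_leI)
  qed
  also have "\<dots> = ennreal (2 powr \<bar>\<alpha>\<bar> * t powr \<alpha>) * ennreal t"
    using assms by (simp add: nn_integral_completion nn_integral_cmult_indicator)
  also have "\<dots> = ennreal (2 powr \<bar>\<alpha>\<bar> * t powr (\<alpha> + 1))"
    using assms by (simp add: ennreal_mult[symmetric] powr_add mult.assoc)
  finally have bound: "(\<integral>\<^sup>+x\<in>{0<..}. ennreal (\<bar>indicator {t..2*t} x\<bar> powr p * x powr \<alpha>) \<partial>lebesgue)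
      \<le> ennreal (2 powr \<bar>\<alpha>\<bar> * t powr (\<alpha> + 1))" .
  show "Lpw p \<alpha> (indicator {t..2*t})"
    by (rule Lpw_wnorm_le(1)[OF _ \<open>0 < p\<close> _ bound]) simp_all
  show "wnorm p \<alpha> (indicator {t..2*t}) \<le> (2 powr \<bar>\<alpha>\<bar> * t powr (\<alpha> + 1)) powr (1/p)"
    by (rule Lpw_wnorm_le(2)[OF _ \<open>0 < p\<close> _ bound]) simp_all
qed

lemma Hop_indicator_ge:
  assumes integrable: "set_integrable lebesgue {0<..} (\<lambda>x. Hkernel lam \<mu> \<nu> x y * indicator {a..b} x)"
    and "0 < a" "a \<le> b" "0 \<le> m" and low: "\<And>x. a \<le> x \<Longrightarrow> x \<le> b \<Longrightarrow> m \<le> Hkernel lam \<mu> \<nu> x y"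
  shows "m * (b - a) \<le> Hop lam \<mu> \<nu> (indicator {a..b}) y"
proof -
  define h where "h x = indicator {0<..} x * (Hkernel lam \<mu> \<nu> x y * indicator {a..b} x)" for x :: real
  have h_nonneg: "0 \<le> h x" for x
    by (simp add: h_def Hkernel_def)
  have [measurable]: "h \<in> borel_measurable lebesgue"
    unfolding h_def Hkernel_def by measurable
  have "integrable lebesgue h"
    using integrable by (simp add: set_integrable_def h_def[abs_def])
  then have fin: "(\<integral>\<^sup>+x. ennreal (h x) \<partial>lebesgue) < \<infinity>"
    using h_nonneg by (simp add: integrable_iff_bounded)
  have "ennreal (m * (b - a)) = (\<integral>\<^sup>+x. ennreal m * indicator {a..b} x \<partial>lebesgue)"
    using assms by (simp add: nn_integral_completion nn_integral_cmult_indicator ennreal_mult)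
  also have "\<dots> \<le> (\<integral>\<^sup>+x. ennreal (h x) \<partial>lebesgue)"
  proof (intro nn_integral_mono)
    fix x :: real
    have "m \<le> h x" if "a \<le> x" "x \<le> b"
      using that low \<open>0 < a\<close> by (simp add: h_def)
    then show "ennreal m * indicator {a..b} x \<le> ennreal (h x)"
      by (simp add: indicator_def ennreal_leI)
  qed
  finally have "enn2real (ennreal (m * (b - a))) \<le> enn2real (\<integral>\<^sup>+x. ennreal (h x) \<partial>lebesgue)"
    using fin by (intro enn2real_mono) auto
  also have "enn2real (\<integral>\<^sup>+x. ennreal (h x) \<partial>lebesgue) = integral\<^sup>L lebesgue h"
    using h_nonneg by (intro integral_eq_nn_integral[symmetric]) auto
  also have "\<dots> = Hop lam \<mu> \<nu> (indicator {a..b}) y"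
    by (simp add: Hop_def set_lebesgue_integral_def h_def[abs_def])
  finally show ?thesis
    using assms by simp
qed

lemma nn_integral_inverse_interval:
  fixes u v :: real
  assumes "0 < u" "u \<le> v"
  shows "(\<integral>\<^sup>+t\<in>{u..v}. ennreal (t powr -1) \<partial>lebesgue) = ennreal (ln v - ln u)"
proof -
  have "((\<lambda>t. t powr -1) has_integral (ln v - ln u)) {u..v}"
  proof (rule fundamental_theorem_of_calculus[OF \<open>u \<le> v\<close>])
    fix x assume "x \<in> {u..v}"
    then have "0 < x" using assms by auto
    then have "(ln has_real_derivative x powr -1) (at x within {u..v})"
      by (auto intro!: derivative_eq_intros simp: powr_minus inverse_eq_divide)
    then show "(ln has_vector_derivative x powr -1) (at x within {u..v})"
      by (simp add: has_real_derivative_iff_has_vector_derivative)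
  qed
  then have "(\<integral>\<^sup>+t\<in>{u..v}. ennreal (t powr -1) \<partial>lborel) = ennreal (ln v - ln u)"
    by (rule nn_integral_has_integral_lebesgue'[rotated]) simp
  then show ?thesis
    by (simp add: nn_integral_completion)
qed

lemma powr_nn_integral_near_0_finite_imp:
  assumes fin: "(\<integral>\<^sup>+y\<in>{0<..1}. ennreal (y powr e) \<partial>lebesgue) < \<infinity>"
  shows "-1 < e"
proof (rule ccontr)
  assume "\<not> -1 < e"
  define M where "M = enn2real (\<integral>\<^sup>+y\<in>{0<..1}. ennreal (y powr e) \<partial>lebesgue)"
  have M: "(\<integral>\<^sup>+y\<in>{0<..1}. ennreal (y powr e) \<partial>lebesgue) = ennreal M" "0 \<le> M"
    using fin by (simp_all add: M_def)
  define \<epsilon> where "\<epsilon> = exp (- (M + 1))"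
  have \<epsilon>: "0 < \<epsilon>" "\<epsilon> \<le> 1"
    using M by (simp_all add: \<epsilon>_def)
  have "ennreal (M + 1) = (\<integral>\<^sup>+t\<in>{\<epsilon>..1}. ennreal (t powr -1) \<partial>lebesgue)"
    using nn_integral_inverse_interval[OF \<epsilon>] by (simp add: \<epsilon>_def add.commute)
  also have "\<dots> \<le> ennreal M"
    unfolding M(1)[symmetric]
  proof (intro nn_integral_mono)
    fix t :: real
    show "ennreal (t powr -1) * indicator {\<epsilon>..1} t \<le> ennreal (t powr e) * indicator {0<..1} t"
      using powr_mono'[of e "-1" t] \<epsilon> \<open>\<not> -1 < e\<close> by (auto simp: indicator_def intro: ennreal_leI)
  qed
  finally show False
    using M by simp
qed

lemma powr_nn_integral_at_top_finite_imp:
  assumes fin: "(\<integral>\<^sup>+y\<in>{1..}. ennreal (y powr e) \<partial>lebesgue) < \<infinity>"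
  shows "e < -1"
proof (rule ccontr)
  assume "\<not> e < -1"
  define M where "M = enn2real (\<integral>\<^sup>+y\<in>{1..}. ennreal (y powr e) \<partial>lebesgue)"
  have M: "(\<integral>\<^sup>+y\<in>{1..}. ennreal (y powr e) \<partial>lebesgue) = ennreal M" "0 \<le> M"
    using fin by (simp_all add: M_def)
  define R where "R = exp (M + 1)"
  have R: "1 \<le> R"
    using M by (simp add: R_def)
  have "ennreal (M + 1) = (\<integral>\<^sup>+t\<in>{1..R}. ennreal (t powr -1) \<partial>lebesgue)"
    using nn_integral_inverse_interval[OF _ R] by (simp add: R_def add.commute)
  also have "\<dots> \<le> ennreal M"
    unfolding M(1)[symmetric]
  proof (intro nn_integral_mono)
    fix t :: real
    show "ennreal (t powr -1) * indicator {1..R} t \<le> ennreal (t powr e) * indicator {1..} t"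
      using powr_mono[of "-1" e t] \<open>\<not> e < -1\<close> by (auto simp: indicator_def intro: ennreal_leI)
  qed
  finally show False
    using M by simp
qed

lemma powr_exponent_eq_of_le:
  fixes k C a b :: real
  assumes "0 < k" and le: "\<And>t. 0 < t \<Longrightarrow> k * t powr a \<le> C * t powr b"
  shows "a = b"
proof (rule ccontr)
  assume "a \<noteq> b"
  define t where "t = (\<bar>C\<bar> / k + 1) powr (1 / (a - b))"
  have base: "0 < \<bar>C\<bar> / k + 1"
    using \<open>0 < k\<close> by (intro add_nonneg_pos) simp_all
  then have t: "0 < t" by (simp add: t_def)
  have "t powr (a - b) = \<bar>C\<bar> / k + 1"
    using \<open>a \<noteq> b\<close> base by (simp add: t_def powr_powr)
  then have "k * t powr a = (\<bar>C\<bar> + k) * t powr b"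
    using \<open>0 < k\<close> t by (simp add: powr_diff field_simps)
  with le[OF t] have "(\<bar>C\<bar> + k) * t powr b \<le> C * t powr b" by simp
  then have "\<bar>C\<bar> + k \<le> C"
    by (rule mult_right_le_imp_le) (use t in simp)
  then show False
    using \<open>0 < k\<close> abs_ge_self[of C] by linarith
qed

lemma wnorm_ge_of_abs_ge:
  assumes "Lpw q \<beta> h" "0 < q" "0 < t" "0 \<le> m"
    and low: "AE y in lebesgue. t \<le> y \<and> y \<le> 2 * t \<longrightarrow> m \<le> \<bar>h y\<bar>"
  shows "m * (2 powr -\<bar>\<beta>\<bar> * t powr (\<beta> + 1)) powr (1/q) \<le> wnorm q \<beta> h"
proof -
  define J where "J = (\<integral>\<^sup>+y\<in>{0<..}. ennreal (\<bar>h y\<bar> powr q * y powr \<beta>) \<partial>lebesgue)"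
  have fin: "J < \<infinity>"
    using assms(1) by (simp add: Lpw_def J_def)
  have "ennreal (m powr q * 2 powr -\<bar>\<beta>\<bar> * t powr \<beta> * t)
      = (\<integral>\<^sup>+y. ennreal (m powr q * 2 powr -\<bar>\<beta>\<bar> * t powr \<beta>) * indicator {t..2*t} y \<partial>lebesgue)"
    using assms by (simp add: nn_integral_completion nn_integral_cmult_indicator ennreal_mult[symmetric])
  also have "\<dots> \<le> J"
    unfolding J_def using low
  proof (intro nn_integral_mono_AE, elim eventually_mono)
    fix y :: real
    assume y: "t \<le> y \<and> y \<le> 2 * t \<longrightarrow> m \<le> \<bar>h y\<bar>"
    have "m powr q * (2 powr -\<bar>\<beta>\<bar> * t powr \<beta>) \<le> \<bar>h y\<bar> powr q * y powr \<beta>" if "t \<le> y" "y \<le> 2 * t"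
      using that y assms by (intro mult_mono powr_mono2 powr_bounds_of_comparable(2)) auto
    then show "ennreal (m powr q * 2 powr -\<bar>\<beta>\<bar> * t powr \<beta>) * indicator {t..2*t} y
        \<le> ennreal (\<bar>h y\<bar> powr q * y powr \<beta>) * indicator {0<..} y"
      using \<open>0 < t\<close> by (auto simp: indicator_def mult.assoc intro: ennreal_leI)
  qed
  finally have "enn2real (ennreal (m powr q * 2 powr -\<bar>\<beta>\<bar> * t powr \<beta> * t)) \<le> enn2real J"
    using fin by (intro enn2real_mono) auto
  then have "m powr q * 2 powr -\<bar>\<beta>\<bar> * t powr \<beta> * t \<le> enn2real J"
    using assms by simp
  then have "(m powr q * (2 powr -\<bar>\<beta>\<bar> * t powr (\<beta> + 1))) powr (1/q) \<le> enn2real J powr (1/q)"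
    using assms by (intro powr_mono2) (auto simp: powr_add mult_ac)
  then show ?thesis
    using assms by (simp add: wnorm_def J_def powr_mult powr_powr)
qed

lemma nn_integral_powr_finite_of_Lpw:
  assumes "Lpw q \<beta> h" "0 < q" "0 < m" "S \<subseteq> {0<..}" and [measurable]: "S \<in> sets lebesgue"
    and low: "AE y in lebesgue. y \<in> S \<longrightarrow> m * y powr e \<le> \<bar>h y\<bar>"
  shows "(\<integral>\<^sup>+y\<in>S. ennreal (y powr (e * q + \<beta>)) \<partial>lebesgue) < \<infinity>"
proof -
  have "ennreal (m powr q) * (\<integral>\<^sup>+y\<in>S. ennreal (y powr (e * q + \<beta>)) \<partial>lebesgue)
      = (\<integral>\<^sup>+y\<in>S. ennreal (m powr q * y powr (e * q + \<beta>)) \<partial>lebesgue)"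
    by (subst nn_integral_cmult[symmetric]) (measurable, simp add: ennreal_mult mult.assoc)
  also have "\<dots> \<le> (\<integral>\<^sup>+y\<in>{0<..}. ennreal (\<bar>h y\<bar> powr q * y powr \<beta>) \<partial>lebesgue)"
    using low
  proof (intro nn_integral_mono_AE, elim eventually_mono)
    fix y :: real
    assume y: "y \<in> S \<longrightarrow> m * y powr e \<le> \<bar>h y\<bar>"
    have "m powr q * y powr (e * q + \<beta>) \<le> \<bar>h y\<bar> powr q * y powr \<beta>" if "y \<in> S"
    proof -
      have "0 < y" using that assms by auto
      then have "m powr q * y powr (e * q + \<beta>) = (m * y powr e) powr q * y powr \<beta>"
        using assms by (simp add: powr_mult powr_powr powr_add mult_ac)
      also have "\<dots> \<le> \<bar>h y\<bar> powr q * y powr \<beta>"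
        using y that assms by (intro mult_right_mono powr_mono2) auto
      finally show ?thesis .
    qed
    then show "ennreal (m powr q * y powr (e * q + \<beta>)) * indicator S y
        \<le> ennreal (\<bar>h y\<bar> powr q * y powr \<beta>) * indicator {0<..} y"
      using assms by (auto simp: indicator_def intro: ennreal_leI)
  qed
  also have "\<dots> < \<infinity>"
    using assms(1) by (simp add: Lpw_def)
  finally show ?thesis
    using \<open>0 < m\<close> by (auto simp: ennreal_mult_less_top)
qed

lemma Hop_dyadic_indicator_ge:
  assumes "set_integrable lebesgue {0<..} (\<lambda>x. Hkernel lam \<mu> \<nu> x y * indicator {t..2*t} x)"
    and "0 < t" "t \<le> y" "y \<le> 2 * t"
  shows "4 powr -(\<bar>\<mu>\<bar> + \<bar>lam\<bar>) * 2 powr -\<bar>\<nu>\<bar> * t powr (\<mu> + \<nu> - lam + 1)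
    \<le> Hop lam \<mu> \<nu> (indicator {t..2*t}) y"
proof -
  define m where "m = 4 powr -(\<bar>\<mu>\<bar> + \<bar>lam\<bar>) * 2 powr -\<bar>\<nu>\<bar> * t powr (\<mu> + \<nu> - lam)"
  have "m \<le> Hkernel lam \<mu> \<nu> x y" if "t \<le> x" "x \<le> 2 * t" for x
  proof -
    have "2 powr -\<bar>\<nu>\<bar> * t powr \<nu> \<le> y powr \<nu>"
      using assms by (intro powr_bounds_of_comparable(2)) auto
    moreover have "m = 4 powr -(\<bar>\<mu>\<bar> + \<bar>lam\<bar>) * t powr \<mu> * (2 powr -\<bar>\<nu>\<bar> * t powr \<nu>) * t powr -lam"
      by (simp add: m_def powr_diff powr_add powr_minus divide_inverse mult_ac)
    ultimately have "m \<le> 4 powr -(\<bar>\<mu>\<bar> + \<bar>lam\<bar>) * t powr \<mu> * y powr \<nu> * t powr -lam"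
      by (simp only:) (intro mult_right_mono mult_left_mono, simp_all)
    also have "\<dots> \<le> Hkernel lam \<mu> \<nu> x y"
      using assms that by (intro Hkernel_ge) auto
    finally show ?thesis .
  qed
  then have "m * (2 * t - t) \<le> Hop lam \<mu> \<nu> (indicator {t..2*t}) y"
    using assms by (intro Hop_indicator_ge) (auto simp: m_def)
  then show ?thesis
    using assms by (simp add: m_def powr_add mult_ac)
qed

lemma Hop_unit_indicator_ge:
  assumes "set_integrable lebesgue {0<..} (\<lambda>x. Hkernel lam \<mu> \<nu> x y * indicator {1..2} x)" "0 < y"
  shows "3 powr -(\<bar>\<mu>\<bar> + \<bar>lam\<bar>) * y powr \<nu> * max 1 y powr -lam \<le> Hop lam \<mu> \<nu> (indicator {1..2}) y"
proof -
  have "3 powr -(\<bar>\<mu>\<bar> + \<bar>lam\<bar>) * 1 powr \<mu> * y powr \<nu> * max 1 y powr -lam \<le> Hkernel lam \<mu> \<nu> x y"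
    if "1 \<le> x" "x \<le> 2" for x
    by (rule Hkernel_ge) (use that assms in \<open>auto simp: max_def\<close>)
  then have "3 powr -(\<bar>\<mu>\<bar> + \<bar>lam\<bar>) * y powr \<nu> * max 1 y powr -lam * (2 - 1) \<le> Hop lam \<mu> \<nu> (indicator {1..2}) y"
    using assms by (intro Hop_indicator_ge) auto
  then show ?thesis by simp
qed

lemma H_bounded_dyadic_test:
  assumes "H_bounded lam \<mu> \<nu> p \<alpha> q \<beta>" "0 < p"
  obtains C where
    "\<And>t. 0 < t \<Longrightarrow> AE y\<in>{0<..} in lebesgue.
          set_integrable lebesgue {0<..} (\<lambda>x. Hkernel lam \<mu> \<nu> x y * indicator {t..2*t} x)"
    and "\<And>t. 0 < t \<Longrightarrow> Lpw q \<beta> (Hop lam \<mu> \<nu> (indicator {t..2*t}))"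
    and "\<And>t. 0 < t \<Longrightarrow> wnorm q \<beta> (Hop lam \<mu> \<nu> (indicator {t..2*t}))
          \<le> C * (2 powr \<bar>\<alpha>\<bar> * t powr (\<alpha> + 1)) powr (1/p)"
proof -
  obtain C where C: "\<And>f. Lpw p \<alpha> f \<Longrightarrow>
      (AE y\<in>{0<..} in lebesgue. set_integrable lebesgue {0<..} (\<lambda>x. Hkernel lam \<mu> \<nu> x y * f x))
      \<and> Lpw q \<beta> (Hop lam \<mu> \<nu> f) \<and> wnorm q \<beta> (Hop lam \<mu> \<nu> f) \<le> C * wnorm p \<alpha> f"
    using assms(1) unfolding H_bounded_def by blast
  have "wnorm q \<beta> (Hop lam \<mu> \<nu> (indicator {t..2*t})) \<le> \<bar>C\<bar> * (2 powr \<bar>\<alpha>\<bar> * t powr (\<alpha> + 1)) powr (1/p)"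
    if "0 < t" for t
  proof -
    have "wnorm q \<beta> (Hop lam \<mu> \<nu> (indicator {t..2*t})) \<le> C * wnorm p \<alpha> (indicator {t..2*t})"
      using C Lpw_indicator_dyadic(1)[OF assms(2) that] by blast
    also have "\<dots> \<le> \<bar>C\<bar> * wnorm p \<alpha> (indicator {t..2*t})"
      by (intro mult_right_mono) (auto simp: wnorm_def)
    also have "\<dots> \<le> \<bar>C\<bar> * (2 powr \<bar>\<alpha>\<bar> * t powr (\<alpha> + 1)) powr (1/p)"
      by (intro mult_left_mono Lpw_indicator_dyadic(2)[OF assms(2) that]) simp
    finally show ?thesis .
  qed
  then show ?thesis
    using that[of "\<bar>C\<bar>"] C Lpw_indicator_dyadic(1)[OF assms(2)] by auto
qed

lemma H_bounded_imp_scaling: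
  assumes "H_bounded lam \<mu> \<nu> p \<alpha> q \<beta>" "1 \<le> p" "p \<le> q"
  shows "lam = \<mu> + \<nu> + 1 + (\<beta> + 1) / q - (\<alpha> + 1) / p"
proof -
  have p: "0 < p" and q: "0 < q" using assms by auto
  obtain C where integrable: "\<And>t. 0 < t \<Longrightarrow> AE y\<in>{0<..} in lebesgue.
          set_integrable lebesgue {0<..} (\<lambda>x. Hkernel lam \<mu> \<nu> x y * indicator {t..2*t} x)"
    and Lpw: "\<And>t. 0 < t \<Longrightarrow> Lpw q \<beta> (Hop lam \<mu> \<nu> (indicator {t..2*t}))"
    and upper: "\<And>t. 0 < t \<Longrightarrow> wnorm q \<beta> (Hop lam \<mu> \<nu> (indicator {t..2*t}))
          \<le> C * (2 powr \<bar>\<alpha>\<bar> * t powr (\<alpha> + 1)) powr (1/p)"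
    using H_bounded_dyadic_test[OF assms(1) p] by blast
  define m where "m = 4 powr -(\<bar>\<mu>\<bar> + \<bar>lam\<bar>) * 2 powr -\<bar>\<nu>\<bar>"
  define k where "k = m * (2 powr -\<bar>\<beta>\<bar>) powr (1/q)"
  have scaling: "k * t powr (\<mu> + \<nu> - lam + 1 + (\<beta> + 1) / q)
      \<le> (C * (2 powr \<bar>\<alpha>\<bar>) powr (1/p)) * t powr ((\<alpha> + 1) / p)"
    if "0 < t" for t
  proof -
    have "AE y in lebesgue. t \<le> y \<and> y \<le> 2 * t \<longrightarrow>
        m * t powr (\<mu> + \<nu> - lam + 1) \<le> \<bar>Hop lam \<mu> \<nu> (indicator {t..2*t}) y\<bar>"
      using integrable[OF that]
    proof (elim AE_mp, intro AE_I2 impI)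
      fix y :: real
      assume "y \<in> {0<..} \<longrightarrow> set_integrable lebesgue {0<..} (\<lambda>x. Hkernel lam \<mu> \<nu> x y * indicator {t..2*t} x)"
        and "t \<le> y \<and> y \<le> 2 * t"
      then show "m * t powr (\<mu> + \<nu> - lam + 1) \<le> \<bar>Hop lam \<mu> \<nu> (indicator {t..2*t}) y\<bar>"
        using Hop_dyadic_indicator_ge[of lam \<mu> \<nu> y t] that by (auto simp: m_def)
    qed
    from wnorm_ge_of_abs_ge[OF Lpw[OF that] q that _ this]
    have lower_upper: "m * t powr (\<mu> + \<nu> - lam + 1) * (2 powr -\<bar>\<beta>\<bar> * t powr (\<beta> + 1)) powr (1/q)
        \<le> C * (2 powr \<bar>\<alpha>\<bar> * t powr (\<alpha> + 1)) powr (1/p)"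
      using upper[OF that] by (auto simp: m_def)
    have split: "(2 powr -\<bar>\<beta>\<bar> * t powr (\<beta> + 1)) powr (1/q) = (2 powr -\<bar>\<beta>\<bar>) powr (1/q) * t powr ((\<beta> + 1) / q)"
      "(2 powr \<bar>\<alpha>\<bar> * t powr (\<alpha> + 1)) powr (1/p) = (2 powr \<bar>\<alpha>\<bar>) powr (1/p) * t powr ((\<alpha> + 1) / p)"
      using that by (simp_all add: powr_mult powr_powr)
    have "k * t powr (\<mu> + \<nu> - lam + 1 + (\<beta> + 1) / q)
        = m * t powr (\<mu> + \<nu> - lam + 1) * ((2 powr -\<bar>\<beta>\<bar>) powr (1/q) * t powr ((\<beta> + 1) / q))"
      by (simp add: k_def powr_add mult_ac)
    also have "\<dots> \<le> C * ((2 powr \<bar>\<alpha>\<bar>) powr (1/p) * t powr ((\<alpha> + 1) / p))"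
      using lower_upper unfolding split .
    finally show ?thesis
      by (simp only: mult.assoc)
  qed
  have "0 < k"
    by (simp add: k_def m_def)
  from powr_exponent_eq_of_le[OF this scaling]
  have "\<mu> + \<nu> - lam + 1 + (\<beta> + 1) / q = (\<alpha> + 1) / p" .
  then show ?thesis by simp
qed

lemma H_bounded_imp_integrability:
  assumes "H_bounded lam \<mu> \<nu> p \<alpha> q \<beta>" "1 \<le> p" "p \<le> q"
  shows "- q * \<nu> < \<beta> + 1" and "\<beta> + 1 < q * (lam - \<nu>)"
proof -
  have p: "0 < p" and q: "0 < q" using assms by auto
  obtain C where integrable_t: "\<And>t. 0 < t \<Longrightarrow> AE y\<in>{0<..} in lebesgue.
          set_integrable lebesgue {0<..} (\<lambda>x. Hkernel lam \<mu> \<nu> x y * indicator {t..2*t} x)"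
    and Lpw_t: "\<And>t. 0 < t \<Longrightarrow> Lpw q \<beta> (Hop lam \<mu> \<nu> (indicator {t..2*t}))"
    using H_bounded_dyadic_test[OF assms(1) p] by blast
  have integrable: "AE y\<in>{0<..} in lebesgue.
      set_integrable lebesgue {0<..} (\<lambda>x. Hkernel lam \<mu> \<nu> x y * indicator {1..2} x)"
    and Lpw: "Lpw q \<beta> (Hop lam \<mu> \<nu> (indicator {1..2}))"
    using integrable_t[of 1] Lpw_t[of 1] by simp_all
  define m where "m = 3 powr -(\<bar>\<mu>\<bar> + \<bar>lam\<bar>)"
  have m_pos: "0 < m"
    by (simp add: m_def)
  have low: "AE y in lebesgue. 0 < y \<longrightarrow>
      m * y powr \<nu> * max 1 y powr -lam \<le> \<bar>Hop lam \<mu> \<nu> (indicator {1..2}) y\<bar>"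
    using integrable by eventually_elim (use Hop_unit_indicator_ge in \<open>force simp: m_def\<close>)
  have "AE y in lebesgue. y \<in> {0<..1} \<longrightarrow> m * y powr \<nu> \<le> \<bar>Hop lam \<mu> \<nu> (indicator {1..2}) y\<bar>"
    using low by eventually_elim (auto simp: max_absorb1)
  then have "(\<integral>\<^sup>+y\<in>{0<..1}. ennreal (y powr (\<nu> * q + \<beta>)) \<partial>lebesgue) < \<infinity>"
    by (intro nn_integral_powr_finite_of_Lpw[OF Lpw q m_pos]) auto
  then have "-1 < \<nu> * q + \<beta>"
    by (rule powr_nn_integral_near_0_finite_imp)
  then show "- q * \<nu> < \<beta> + 1"
    by (simp add: algebra_simps)
  have "AE y in lebesgue. y \<in> {1..} \<longrightarrow> m * y powr (\<nu> - lam) \<le> \<bar>Hop lam \<mu> \<nu> (indicator {1..2}) y\<bar>"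
    using low by eventually_elim (auto simp: max_def powr_diff powr_minus divide_inverse mult.assoc)
  then have "(\<integral>\<^sup>+y\<in>{1..}. ennreal (y powr ((\<nu> - lam) * q + \<beta>)) \<partial>lebesgue) < \<infinity>"
    by (intro nn_integral_powr_finite_of_Lpw[OF Lpw q m_pos]) auto
  then have "(\<nu> - lam) * q + \<beta> < -1"
    by (rule powr_nn_integral_at_top_finite_imp)
  then show "\<beta> + 1 < q * (lam - \<nu>)"
    by (simp add: algebra_simps)
qed

lemma boundedness_conditions_equiv:
  fixes p q lam \<mu> \<nu> \<alpha> \<beta> :: real
  assumes "0 < p" "0 < q" and lam: "lam = \<mu> + \<nu> + 1 + (\<beta> + 1) / q - (\<alpha> + 1) / p"
  shows "(- q * \<nu> < \<beta> + 1 \<and> \<beta> + 1 < q * (lam - \<nu>)) \<longleftrightarrow>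
         (p * (\<mu> + 1 - lam) < \<alpha> + 1 \<and> \<alpha> + 1 < p * (\<mu> + 1))"
proof -
  have "- q * \<nu> < \<beta> + 1 \<longleftrightarrow> -\<nu> < (\<beta> + 1) / q"
    "\<beta> + 1 < q * (lam - \<nu>) \<longleftrightarrow> (\<beta> + 1) / q < lam - \<nu>"
    "p * (\<mu> + 1 - lam) < \<alpha> + 1 \<longleftrightarrow> \<mu> + 1 - lam < (\<alpha> + 1) / p"
    "\<alpha> + 1 < p * (\<mu> + 1) \<longleftrightarrow> (\<alpha> + 1) / p < \<mu> + 1"
    using assms(1,2) by (simp_all add: pos_less_divide_eq pos_divide_less_eq mult.commute)
  then show ?thesis
    using lam by linarith
qed

theorem theorem6p2:
  fixes p q lam \<mu> \<nu> \<alpha> \<beta> :: real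
  assumes "1 \<le> p" and "p \<le> q"
  shows "(H_bounded lam \<mu> \<nu> p \<alpha> q \<beta> \<longleftrightarrow>
            lam = \<mu> + \<nu> + 1 + (\<beta> + 1) / q - (\<alpha> + 1) / p \<and>
            - q * \<nu> < \<beta> + 1 \<and> \<beta> + 1 < q * (lam - \<nu>))
       \<and> (H_bounded lam \<mu> \<nu> p \<alpha> q \<beta> \<longleftrightarrow>
            lam = \<mu> + \<nu> + 1 + (\<beta> + 1) / q - (\<alpha> + 1) / p \<and>
            p * (\<mu> + 1 - lam) < \<alpha> + 1 \<and> \<alpha> + 1 < p * (\<mu> + 1))"
proof -
  have characterisation: "H_bounded lam \<mu> \<nu> p \<alpha> q \<beta> \<longleftrightarrow>
      lam = \<mu> + \<nu> + 1 + (\<beta> + 1) / q - (\<alpha> + 1) / p \<and> - q * \<nu> < \<beta> + 1 \<and> \<beta> + 1 < q * (lam - \<nu>)"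
    using H_bounded_imp_scaling[OF _ assms] H_bounded_imp_integrability[OF _ assms]
      H_bounded_if[OF assms] by blast
  moreover have "0 < p" "0 < q"
    using assms by auto
  ultimately show ?thesis
    using boundedness_conditions_equiv by blast
qed

end
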